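(* Let $A \in \mathbb{Z}^{(n-2)\times n}$ be an integer matrix of rank $n-2$ with $\ker_{\mathbb{Z}} A \cap \mathbb{N}^n = \{0\}$, and let $B$ be a Gale transform of $A$ whose rows $b_1,\dots,b_n$ are all nonzero. If the toric ideal $I_A$ is strongly robust, then $A$ has at least two mixed bouquets.
   Context: For $A \in \mathbb{Z}^{d\times n}$ of rank $d$, the toric ideal is $I_A = \langle p^u - p^v : u,v\in\mathbb{N}^n,\ Au = Av\rangle \subseteq \mathbb{K}[p_1,\dots,p_n]$. For $u \in \mathbb{N}^n$, $\mathcal{F}(u)=\{v\in\mathbb{N}^n : Av = Au\}$. A binomial $p^u - p^v$ is indispensable if $\mathcal{F}(u)=\{u,v\}$ and $\mathrm{supp}(u)\cap\mathrm{supp}(v)=\emptyset$; the set of these is $\mathcal{S}(A)$. A binomial $p^u-p^v\in I_A$ is primitive if there is no other binomial $p^{u'}-p^{v'}\in I_A$ with $p^{u'}\mid p^u$ and $p^{v'}\mid p^v$; the Graver basis $\mathcal{G}r(A)$ is the set of primitive binomials. $I_A$ is strongly robust if $\mathcal{S}(A)=\mathcal{G}r(A)$. A Gale transform of $A$ is an $n\times (n-d)$ integer matrix $B$ whose columns form a basis of $\ker_{\mathbb{Z}}A$, with rows $b_1,\dots,b_n$. A bouquet is a maximal subset $S\subseteq[n]$ such that $\mathrm{span}(b_s : s\in S)$ is one-dimensional. A bouquet $S$ is mixed if its vectors do not all point in the same direction, i.e. there exist $s,t\in S$ with $b_s = \lambda b_t$ for some $\lambda<0$. *)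

theory Defs
  imports "Jordan_Normal_Form.DL_Rank"
begin

definition natvec :: "nat \<Rightarrow> int vec \<Rightarrow> bool" where
  "natvec n u \<longleftrightarrow> u \<in> carrier_vec n \<and> (\<forall>i<n. u $ i \<ge> 0)"

definition supp :: "int vec \<Rightarrow> nat set" where
  "supp u = {i. i < dim_vec u \<and> u $ i \<noteq> 0}"

definition fiber :: "int mat \<Rightarrow> int vec \<Rightarrow> int vec set" where
  "fiber A u = {v. natvec (dim_col A) v \<and> A *\<^sub>v v = A *\<^sub>v u}"

definition kerZ :: "int mat \<Rightarrow> int vec set" where
  "kerZ A = {x. x \<in> carrier_vec (dim_col A) \<and> A *\<^sub>v x = 0\<^sub>v (dim_row A)}"

text \<open>A nonzero binomial p^u - p^v (encoded as the pair (u,v), u \<noteq> v) lies in I_A.\<close>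
definition in_toric :: "int mat \<Rightarrow> int vec \<Rightarrow> int vec \<Rightarrow> bool" where
  "in_toric A u v \<longleftrightarrow> natvec (dim_col A) u \<and> natvec (dim_col A) v \<and> u \<noteq> v
      \<and> A *\<^sub>v u = A *\<^sub>v v"

definition indispensable :: "int mat \<Rightarrow> int vec \<Rightarrow> int vec \<Rightarrow> bool" where
  "indispensable A u v \<longleftrightarrow> natvec (dim_col A) u \<and> natvec (dim_col A) v \<and> u \<noteq> v
      \<and> fiber A u = {u, v} \<and> supp u \<inter> supp v = {}"

text \<open>p^{u'} divides p^u iff u' \<le> u componentwise.\<close>
definition primitive :: "int mat \<Rightarrow> int vec \<Rightarrow> int vec \<Rightarrow> bool" where
  "primitive A u v \<longleftrightarrow> in_toric A u v \<and>
     \<not> (\<exists>u' v'. in_toric A u' v' \<and> (u', v') \<noteq> (u, v)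
            \<and> (\<forall>i < dim_col A. u' $ i \<le> u $ i) \<and> (\<forall>i < dim_col A. v' $ i \<le> v $ i))"

definition indispensables :: "int mat \<Rightarrow> (int vec \<times> int vec) set" where
  "indispensables A = {(u, v). indispensable A u v}"

definition graver :: "int mat \<Rightarrow> (int vec \<times> int vec) set" where
  "graver A = {(u, v). primitive A u v}"

definition strongly_robust :: "int mat \<Rightarrow> bool" where
  "strongly_robust A \<longleftrightarrow> indispensables A = graver A"

definition rank_int :: "int mat \<Rightarrow> nat" where
  "rank_int A = vec_space.rank (dim_row A) (map_mat rat_of_int A)"

definition gale :: "int mat \<Rightarrow> int mat \<Rightarrow> bool" where
  "gale A B \<longleftrightarrow> dim_row B = dim_col A \<and> dim_col B = dim_col A - rank_int A
     \<and> (\<forall>j < dim_col B. col B j \<in> kerZ A)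
     \<and> (\<forall>x \<in> kerZ A. \<exists>!c. c \<in> carrier_vec (dim_col B) \<and> x = B *\<^sub>v c)"

definition brow :: "int mat \<Rightarrow> nat \<Rightarrow> rat vec" where
  "brow B s = map_vec rat_of_int (row B s)"

definition one_dim_span :: "int mat \<Rightarrow> nat set \<Rightarrow> bool" where
  "one_dim_span B S \<longleftrightarrow>
     (\<exists>w. w \<in> carrier_vec (dim_col B) \<and> w \<noteq> 0\<^sub>v (dim_col B) \<and> (\<forall>s\<in>S. \<exists>c. brow B s = c \<cdot>\<^sub>v w))
     \<and> (\<exists>s\<in>S. brow B s \<noteq> 0\<^sub>v (dim_col B))"

definition bouquet :: "int mat \<Rightarrow> nat set \<Rightarrow> bool" where
  "bouquet B S \<longleftrightarrow> S \<subseteq> {..<dim_row B} \<and> one_dim_span B S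
     \<and> (\<forall>T. S \<subset> T \<and> T \<subseteq> {..<dim_row B} \<longrightarrow> \<not> one_dim_span B T)"

definition mixed_bouquet :: "int mat \<Rightarrow> nat set \<Rightarrow> bool" where
  "mixed_bouquet B S \<longleftrightarrow> bouquet B S \<and>
     (\<exists>s\<in>S. \<exists>t\<in>S. \<exists>l::rat. l < 0 \<and> brow B s = l \<cdot>\<^sub>v brow B t)"

end

theory Submission
  imports Defs "HOL-Library.Product_Plus"
begin

text \<open>Let \<open>b\<^sub>1, \<dots>, b\<^sub>n \<in> \<int>\<^sup>2\<close> be the rows of \<open>B\<close>. The map \<open>x \<mapsto> (det(x, b\<^sub>j))\<^sub>j\<close> identifies \<open>\<int>\<^sup>2\<close> with
  \<open>ker\<^sub>\<int> A\<close>, and \<open>ker\<^sub>\<int> A \<inter> \<nat>\<^sup>n = {0}\<close> says that the \<open>b\<^sub>j\<close> positively span the plane.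
  If \<open>e\<close> is the primitive vector in the direction of some \<open>b\<^sub>i\<close>, the kernel vector of \<open>e\<close> is a circuit,
  so it gives a primitive binomial, which strong robustness makes indispensable. Its fiber has only
  two elements, and this forces a cone condition: for every \<open>f\<close> with \<open>det(e, f) = 1\<close> some \<open>b\<^sub>j\<close> lies
  strictly inside the cone spanned by \<open>f\<close> and \<open>-e - f\<close>.

  Let \<open>R\<close> be the set of primitive directions of the rows. Sliding \<open>f\<close> along the line
  \<open>det(e, f) = 1\<close> shows, with the cone condition, that for each \<open>e \<in> R\<close> either \<open>-e \<in> R\<close> or \<open>-e\<close> lies in a
  triangle \<open>0, u, d\<close> with \<open>u, d \<in> R\<close>. Hence the maximiser \<open>m\<close> of a generic linear functional on \<open>R\<close>
  satisfies \<open>-m \<in> R\<close>. Choosing the functional so that it prefers one open half-plane gives two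
  such antipodal pairs \<open>\<plusminus>m\<^sub>1\<close>, \<open>\<plusminus>m\<^sub>2\<close> with \<open>m\<^sub>1, m\<^sub>2\<close> independent. The lines through them are two
  distinct mixed bouquets.\<close>

section \<open>Integer vectors in the plane\<close>

definition det2 :: "int \<times> int \<Rightarrow> int \<times> int \<Rightarrow> int" where
  "det2 x y = fst x * snd y - snd x * fst y"

definition dot2 :: "int \<times> int \<Rightarrow> int \<times> int \<Rightarrow> int" where
  "dot2 x y = fst x * fst y + snd x * snd y"

definition scale2 :: "int \<Rightarrow> int \<times> int \<Rightarrow> int \<times> int" where
  "scale2 t x = (t * fst x, t * snd x)"

definition primitive_vector :: "int \<times> int \<Rightarrow> int \<times> int" where
  "primitive_vector x = (fst x div gcd (fst x) (snd x), snd x div gcd (fst x) (snd x))"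

lemma pair_eq_0_iff [simp]: "(a, b) = 0 \<longleftrightarrow> a = 0 \<and> b = 0"
  by (simp add: zero_prod_def)

lemma det2_self [simp]: "det2 x x = 0"
  by (simp add: det2_def)

lemma det2_swap: "det2 y x = - det2 x y"
  by (simp add: det2_def)

lemma det2_linear [simp]:
  "det2 (x + y) z = det2 x z + det2 y z" "det2 z (x + y) = det2 z x + det2 z y"
  "det2 (x - y) z = det2 x z - det2 y z" "det2 z (x - y) = det2 z x - det2 z y"
  "det2 (- x) z = - det2 x z" "det2 z (- x) = - det2 z x"
  "det2 (scale2 t x) z = t * det2 x z" "det2 z (scale2 t x) = t * det2 z x"
  by (simp_all add: det2_def scale2_def algebra_simps)

lemma dot2_linear [simp]:
  "dot2 z (x + y) = dot2 z x + dot2 z y" "dot2 z (- x) = - dot2 z x"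
  "dot2 z (scale2 t x) = t * dot2 z x"
  by (simp_all add: dot2_def scale2_def algebra_simps)

lemma det2_nonzero_right: "det2 x y \<noteq> 0 \<Longrightarrow> y \<noteq> 0"
  by (auto simp: det2_def)

lemma det2_cramer:
  "scale2 (det2 u d) x = scale2 (det2 x d) u + scale2 (det2 u x) d"
  by (simp add: scale2_def det2_def prod_eq_iff algebra_simps)

lemma det2_plucker: "det2 e f * det2 u d = det2 e u * det2 f d - det2 e d * det2 f u"
  by (simp add: det2_def algebra_simps)

lemma det2_dot2_eq_0_imp_eq_0:
  assumes "v \<noteq> 0" "det2 v z = 0" "dot2 v z = 0"
  shows "z = 0"
proof -
  have "(fst v * fst v + snd v * snd v) * fst z = fst v * dot2 v z - snd v * det2 v z"
    and "(fst v * fst v + snd v * snd v) * snd z = snd v * dot2 v z + fst v * det2 v z"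
    by (simp_all add: det2_def dot2_def algebra_simps)
  moreover have "fst v * fst v + snd v * snd v > 0"
    using assms(1) by (cases v) (auto simp: sum_squares_gt_zero_iff)
  ultimately show ?thesis
    using assms(2,3) by (cases z) auto
qed

lemma parallel_to_coprime_imp_multiple:
  assumes "coprime (fst e) (snd e)" "det2 x e = 0"
  shows "\<exists>t. x = scale2 t e"
proof -
  obtain p q where pq: "p * fst e + q * snd e = 1"
    using bezout_int[of "fst e" "snd e"] assms(1) by (auto simp: coprime_iff_gcd_eq_1)
  have "fst x = fst x * (p * fst e + q * snd e)" "snd x = snd x * (p * fst e + q * snd e)"
    using pq by simp_all
  then have "x = scale2 (p * fst x + q * snd x) e"
    using assms(2) by (simp add: scale2_def det2_def prod_eq_iff algebra_simps)
  then show ?thesis ..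
qed

lemma parallel_imp_common_multiple:
  assumes "det2 x y = 0" "y \<noteq> 0"
  shows "\<exists>a c. a \<noteq> 0 \<and> scale2 a x = scale2 c y"
proof (cases "fst y = 0")
  case True
  then have "scale2 (snd y) x = scale2 (snd x) y"
    using assms by (simp add: scale2_def det2_def prod_eq_iff mult.commute)
  then show ?thesis
    using True assms(2) by (metis pair_eq_0_iff surj_pair fst_conv snd_conv)
next
  case False
  then have "scale2 (fst y) x = scale2 (fst x) y"
    using assms by (simp add: scale2_def det2_def prod_eq_iff mult.commute)
  then show ?thesis
    using False by blast
qed

lemma gcd_pair_pos: "(x :: int \<times> int) \<noteq> 0 \<Longrightarrow> 0 < gcd (fst x) (snd x)"
  by (cases x) (auto simp: gcd_pos_int)

lemma scale2_gcd_primitive_vector: "scale2 (gcd (fst x) (snd x)) (primitive_vector x) = x"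
  by (simp add: scale2_def primitive_vector_def)

lemma coprime_primitive_vector:
  "x \<noteq> 0 \<Longrightarrow> coprime (fst (primitive_vector x)) (snd (primitive_vector x))"
  by (cases x) (auto simp: primitive_vector_def intro: div_gcd_coprime)

lemma primitive_vector_nonzero: "x \<noteq> 0 \<Longrightarrow> primitive_vector x \<noteq> 0"
  using scale2_gcd_primitive_vector[of x] by (auto simp: scale2_def)

lemma primitive_vector_scale2:
  assumes "coprime (fst e) (snd e)" "t \<noteq> 0"
  shows "primitive_vector (scale2 t e) = scale2 (sgn t) e"
proof -
  have "gcd (t * fst e) (t * snd e) = \<bar>t\<bar>"
    using assms(1) by (simp add: gcd_mult_left abs_mult coprime_iff_gcd_eq_1)
  moreover have "t * a div \<bar>t\<bar> = sgn t * a" for a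
  proof -
    have "t * a = sgn t * a * \<bar>t\<bar>"
      by (metis mult.commute mult.left_commute sgn_mult_abs)
    then show ?thesis
      using assms(2) by (metis abs_eq_0 nonzero_mult_div_cancel_right)
  qed
  ultimately show ?thesis
    by (simp add: primitive_vector_def scale2_def)
qed

lemma primitive_vector_antiparallel:
  assumes e: "coprime (fst e) (snd e)" and "det2 x e = 0" "det2 f e < 0" "0 < det2 f x"
  shows "primitive_vector x = - e"
proof -
  obtain t where t: "x = scale2 t e"
    using parallel_to_coprime_imp_multiple[OF e] assms(2) by blast
  then have "t < 0"
    using assms(3,4) by (auto simp: zero_less_mult_iff)
  then show ?thesis
    using primitive_vector_scale2[OF e] t by (simp add: scale2_def uminus_prod_def)
qed

lemma det2_primitive_vector_sign:
  assumes "x \<noteq> 0"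
  shows "0 < det2 y (primitive_vector x) \<longleftrightarrow> 0 < det2 y x"
    and "det2 y (primitive_vector x) < 0 \<longleftrightarrow> det2 y x < 0"
    and "det2 y (primitive_vector x) = 0 \<longleftrightarrow> det2 y x = 0"
    and "0 < det2 (primitive_vector x) y \<longleftrightarrow> 0 < det2 x y"
    and "det2 (primitive_vector x) y = 0 \<longleftrightarrow> det2 x y = 0"
proof -
  define g where "g = gcd (fst x) (snd x)"
  have g: "0 < g"
    using gcd_pair_pos[OF assms] by (simp add: g_def)
  have "det2 y x = g * det2 y (primitive_vector x)" "det2 x y = g * det2 (primitive_vector x) y"
    using scale2_gcd_primitive_vector[of x] by (metis g_def det2_linear(7,8))+
  with g show "0 < det2 y (primitive_vector x) \<longleftrightarrow> 0 < det2 y x"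
    and "det2 y (primitive_vector x) < 0 \<longleftrightarrow> det2 y x < 0"
    and "det2 y (primitive_vector x) = 0 \<longleftrightarrow> det2 y x = 0"
    and "0 < det2 (primitive_vector x) y \<longleftrightarrow> 0 < det2 x y"
    and "det2 (primitive_vector x) y = 0 \<longleftrightarrow> det2 x y = 0"
    by (simp_all add: zero_less_mult_iff mult_less_0_iff)
qed

section \<open>Antipodal pairs in a planar configuration\<close>

text \<open>\<open>x\<close> lies in the triangle with vertices \<open>0, u, d\<close>, but not on its two edges through \<open>0\<close>.\<close>
definition in_triangle :: "int \<times> int \<Rightarrow> int \<times> int \<Rightarrow> int \<times> int \<Rightarrow> bool" where
  "in_triangle x u d \<longleftrightarrow> 0 < det2 u x \<and> 0 < det2 x d \<and> det2 u x + det2 x d \<le> det2 u d"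

definition antipodes_covered :: "(int \<times> int) set \<Rightarrow> bool" where
  "antipodes_covered R \<longleftrightarrow> (\<forall>e\<in>R. - e \<in> R \<or> (\<exists>u\<in>R. \<exists>d\<in>R. in_triangle (- e) u d))"

lemma in_triangle_uminus [simp]: "in_triangle (- x) (- u) (- d) \<longleftrightarrow> in_triangle x u d"
  by (simp add: in_triangle_def)

lemma in_triangle_dot2_le:
  assumes tri: "in_triangle x u d" and u: "dot2 c u \<le> a" and d: "dot2 c d \<le> a" and a: "0 \<le> a"
  shows "dot2 c x \<le> a" and "dot2 c x = a \<Longrightarrow> dot2 c u = a"
proof -
  define s t where "s = det2 x d" and "t = det2 u x"
  have st: "0 < s" "0 < t" "s + t \<le> det2 u d"
    using tri by (auto simp: in_triangle_def s_def t_def)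
  have cramer: "det2 u d * dot2 c x = s * dot2 c u + t * dot2 c d"
    using arg_cong[OF det2_cramer[of u d x], of "dot2 c"] by (simp add: s_def t_def)
  have su: "s * dot2 c u \<le> s * a" and td: "t * dot2 c d \<le> t * a"
    using st u d by simp_all
  have sta: "(s + t) * a \<le> det2 u d * a"
    using st a by (intro mult_right_mono) auto
  have "det2 u d * dot2 c x \<le> det2 u d * a"
    using cramer su td sta by (simp add: distrib_right)
  then show "dot2 c x \<le> a"
    using st by (simp add: mult_le_cancel_left)
  assume x: "dot2 c x = a"
  show "dot2 c u = a"
  proof (rule ccontr)
    assume "dot2 c u \<noteq> a"
    then have "s * dot2 c u < s * a"
      using st u by simp
    then show False
      using cramer td sta x by (simp add: distrib_right)
  qed
qed

text \<open>Every \<open>-r\<close> with \<open>r \<in> R\<close> is dominated by \<open>m\<close>, directly or through its triangle. If \<open>-m \<notin> R\<close>, then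
  \<open>m\<close> lies in a triangle \<open>0, -u, -d\<close>, which forces the tie \<open>dot2 c (-u) = dot2 c m\<close>.\<close>
lemma antipodes_covered_maximizer:
  assumes cov: "antipodes_covered R" and m: "m \<in> R" and max: "\<forall>r\<in>R. dot2 c r \<le> dot2 c m"
    and pos: "0 < dot2 c m" and inj: "inj_on (dot2 c) (R \<union> uminus ` R)"
  shows "- m \<in> R"
proof -
  have neg_le: "dot2 c (- r) \<le> dot2 c m" if r: "r \<in> R" for r
  proof (cases "- r \<in> R")
    case True
    then show ?thesis using max by blast
  next
    case False
    then obtain u d where "u \<in> R" "d \<in> R" "in_triangle (- r) u d"
      using cov r by (auto simp: antipodes_covered_def)
    then show ?thesis
      using max pos in_triangle_dot2_le(1) by fastforce
  qed
  show ?thesis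
  proof (rule ccontr)
    assume "- m \<notin> R"
    then obtain u d where ud: "u \<in> R" "d \<in> R" "in_triangle (- m) u d"
      using cov m by (auto simp: antipodes_covered_def)
    then have "in_triangle m (- u) (- d)"
      by (metis in_triangle_uminus minus_minus)
    then have "dot2 c (- u) = dot2 c m"
      using neg_le[OF ud(1)] neg_le[OF ud(2)] pos in_triangle_dot2_le(2) by fastforce
    moreover have "- u \<in> R \<union> uminus ` R" "m \<in> R \<union> uminus ` R"
      using ud m by auto
    ultimately have "- u = m"
      by (rule inj_onD[OF inj])
    then show False
      using \<open>- m \<notin> R\<close> ud by auto
  qed
qed

lemma inj_on_det2_dot2_combination:
  assumes v: "v \<noteq> 0" and K: "\<And>x. x \<in> X \<Longrightarrow> 2 * \<bar>dot2 v x\<bar> < K"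
  shows "inj_on (\<lambda>x. K * det2 v x + dot2 v x) X"
proof (rule inj_onI)
  fix a b assume ab: "a \<in> X" "b \<in> X" "K * det2 v a + dot2 v a = K * det2 v b + dot2 v b"
  have K0: "0 < K"
    using K[OF ab(1)] by linarith
  have "K * (det2 v a - det2 v b) = dot2 v b - dot2 v a"
    using ab(3) by (simp add: right_diff_distrib)
  then have "K * \<bar>det2 v a - det2 v b\<bar> = \<bar>dot2 v b - dot2 v a\<bar>"
    using K0 by (metis abs_mult abs_of_pos)
  also have "\<dots> < K * 1"
    using K[OF ab(1)] K[OF ab(2)] by linarith
  finally have "det2 v a = det2 v b"
    using K0 by (simp add: mult_less_cancel_left)
  then have "det2 v (a - b) = 0" "dot2 v (a - b) = 0"
    using ab(3) by (simp_all add: dot2_def algebra_simps)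
  then have "a - b = 0"
    by (rule det2_dot2_eq_0_imp_eq_0[OF v])
  then show "a = b"
    by simp
qed

text \<open>Take \<open>dot2 c = K \<cdot> det2 v + dot2 v\<close> with \<open>K\<close> larger than twice every \<open>\<bar>dot2 v x\<bar>\<close>.\<close>
lemma separating_functional:
  assumes fin: "finite X" and v: "v \<noteq> 0"
  obtains c M where "0 \<le> M" and "inj_on (dot2 c) X"
    and "\<And>x. x \<in> X \<Longrightarrow> 0 < det2 v x \<Longrightarrow> M < dot2 c x"
    and "\<And>x. x \<in> X \<Longrightarrow> det2 v x \<le> 0 \<Longrightarrow> dot2 c x \<le> M"
proof -
  define M where "M = Max (insert 0 ((\<lambda>x. \<bar>dot2 v x\<bar>) ` X))"
  have M: "\<bar>dot2 v x\<bar> \<le> M" if "x \<in> X" for x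
    unfolding M_def using fin that by (intro Max_ge) auto
  have M0: "0 \<le> M"
    unfolding M_def using fin by (intro Max_ge) auto
  define K where "K = 2 * M + 1"
  define c where "c = (fst v - K * snd v, snd v + K * fst v)"
  have c: "dot2 c = (\<lambda>x. K * det2 v x + dot2 v x)"
    by (rule ext) (simp add: c_def dot2_def det2_def algebra_simps)
  show ?thesis
  proof (rule that[OF M0])
    show "inj_on (dot2 c) X"
      unfolding c using M K_def by (intro inj_on_det2_dot2_combination[OF v]) fastforce
  next
    fix x assume x: "x \<in> X" "0 < det2 v x"
    then have "K \<le> K * det2 v x"
      using M0 K_def by simp
    then show "M < dot2 c x"
      using M[OF x(1)] K_def abs_ge_minus_self[of "dot2 v x"] unfolding c by linarith
  next
    fix x assume x: "x \<in> X" "det2 v x \<le> 0"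
    then have "K * det2 v x \<le> 0"
      using M0 K_def mult_nonneg_nonpos[of K "det2 v x"] by simp
    then show "dot2 c x \<le> M"
      using M[OF x(1)] abs_ge_self[of "dot2 v x"] unfolding c by linarith
  qed
qed

lemma antipodal_pair_in_half_plane:
  assumes fin: "finite R" and cov: "antipodes_covered R" and v: "v \<noteq> 0"
    and r0: "r0 \<in> R" "0 < det2 v r0"
  shows "\<exists>m\<in>R. - m \<in> R \<and> 0 < det2 v m"
proof -
  have "finite (R \<union> uminus ` R)"
    using fin by blast
  then obtain M c where M0: "0 \<le> M" and inj: "inj_on (dot2 c) (R \<union> uminus ` R)"
    and above: "\<And>x. x \<in> R \<union> uminus ` R \<Longrightarrow> 0 < det2 v x \<Longrightarrow> M < dot2 c x"
    and below: "\<And>x. x \<in> R \<union> uminus ` R \<Longrightarrow> det2 v x \<le> 0 \<Longrightarrow> dot2 c x \<le> M"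
    by (rule separating_functional[OF _ v]) blast
  have "Max (dot2 c ` R) \<in> dot2 c ` R"
    using fin r0(1) by (intro Max_in) auto
  then obtain m where m: "m \<in> R" "dot2 c m = Max (dot2 c ` R)"
    by auto
  have max: "\<forall>r\<in>R. dot2 c r \<le> dot2 c m"
    using m fin by auto
  have "M < dot2 c r0"
    using r0 by (intro above) simp_all
  moreover have "dot2 c r0 \<le> dot2 c m"
    using max r0(1) by blast
  ultimately have "M < dot2 c m"
    by linarith
  have "0 < det2 v m"
  proof (rule ccontr)
    assume "\<not> 0 < det2 v m"
    then have "dot2 c m \<le> M"
      using m(1) by (intro below) simp_all
    then show False
      using \<open>M < dot2 c m\<close> by simp
  qed
  moreover have "- m \<in> R"
    using M0 \<open>M < dot2 c m\<close> by (intro antipodes_covered_maximizer[OF cov m(1) max _ inj]) simp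
  ultimately show ?thesis
    using m(1) by blast
qed

lemma two_independent_antipodal_pairs:
  assumes fin: "finite R" and cov: "antipodes_covered R"
    and span: "\<And>v. v \<noteq> 0 \<Longrightarrow> \<exists>r\<in>R. 0 < det2 v r"
  shows "\<exists>m1\<in>R. \<exists>m2\<in>R. - m1 \<in> R \<and> - m2 \<in> R \<and> det2 m1 m2 \<noteq> 0"
proof -
  have pair: "\<exists>m\<in>R. - m \<in> R \<and> 0 < det2 v m" if "v \<noteq> 0" for v
    using span[OF that] antipodal_pair_in_half_plane[OF fin cov that] by blast
  obtain m1 where m1: "m1 \<in> R" "- m1 \<in> R" "0 < det2 (1, 0) m1"
    using pair[of "(1, 0)"] by auto
  then have "m1 \<noteq> 0"
    by (intro det2_nonzero_right[of "(1, 0)"]) simp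
  then obtain m2 where "m2 \<in> R" "- m2 \<in> R" "0 < det2 m1 m2"
    using pair by blast
  with m1 show ?thesis
    by force
qed

lemma in_triangle_uminus_of_unimodular:
  assumes ef: "det2 e f = 1" and "0 < det2 e u" "det2 e d < 0" "0 < det2 f u" "0 < det2 f d"
  shows "in_triangle (- e) u d"
proof -
  have "det2 u d = det2 e u * det2 f d - det2 e d * det2 f u"
    using det2_plucker[of e f u d] ef by simp
  moreover have "det2 e u \<le> det2 e u * det2 f d" "- det2 e d \<le> - det2 e d * det2 f u"
    using assms(2-5) by simp_all
  moreover have "det2 u (- e) = det2 e u" "det2 (- e) d = - det2 e d"
    by (simp_all add: det2_swap[of u])
  ultimately show ?thesis
    using assms(2,3) unfolding in_triangle_def by linarith
qed

lemma exists_threshold_crossing: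
  fixes x y :: "nat \<Rightarrow> int" and n :: nat
  defines "P \<equiv> \<lambda>k. \<exists>j<n. 0 < y j \<and> 0 < x j + k * y j"
  assumes j0: "j0 < n" "0 < y j0"
  shows "\<exists>m. P m \<and> \<not> P (m - 1)"
proof (rule ccontr)
  assume no_crossing: "\<nexists>m. P m \<and> \<not> P (m - 1)"
  define L where "L = (\<Sum>j<n. \<bar>x j\<bar>)"
  have L: "\<bar>x j\<bar> \<le> L" if "j < n" for j
    unfolding L_def using that by (intro member_le_sum) auto
  have start: "P (\<bar>x j0\<bar> + 1)"
  proof -
    have "\<bar>x j0\<bar> + 1 \<le> (\<bar>x j0\<bar> + 1) * y j0"
      using j0(2) by simp
    then have "0 < x j0 + (\<bar>x j0\<bar> + 1) * y j0"
      using abs_ge_minus_self[of "x j0"] by linarith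
    then show ?thesis
      unfolding P_def using j0 by blast
  qed
  have "P k" if "k \<le> \<bar>x j0\<bar> + 1" for k
    using that by (induction k rule: int_le_induct) (use start no_crossing in auto)
  then have "P (- L - 1)"
    using L[OF j0(1)] by simp
  then obtain j where j: "j < n" "0 < y j" "0 < x j + (- L - 1) * y j"
    unfolding P_def by blast
  have "(- L - 1) * y j \<le> - L - 1"
    using j(2) L[OF j(1)] mult_left_mono_neg[of 1 "y j" "- L - 1"] by auto
  then show False
    using j(3) L[OF j(1)] abs_ge_self[of "x j"] by linarith
qed

lemma exists_threshold_partner:
  fixes b :: "nat \<Rightarrow> int \<times> int"
  assumes e: "coprime (fst e) (snd e)" and j0: "j0 < n" "0 < det2 e (b j0)"
  obtains f where "det2 e f = 1" "\<exists>j<n. 0 < det2 e (b j) \<and> 0 < det2 f (b j)"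
    "\<not> (\<exists>j<n. 0 < det2 e (b j) \<and> 0 < det2 (f - e) (b j))"
proof -
  obtain p q where "p * fst e + q * snd e = 1"
    using bezout_int[of "fst e" "snd e"] e by (auto simp: coprime_iff_gcd_eq_1)
  then have f0: "det2 e (- q, p) = 1"
    by (simp add: det2_def algebra_simps)
  define f where "f k = (- q, p) + scale2 k e" for k
  obtain m where "\<exists>j<n. 0 < det2 e (b j) \<and> 0 < det2 (f m) (b j)"
    and "\<not> (\<exists>j<n. 0 < det2 e (b j) \<and> 0 < det2 (f (m - 1)) (b j))"
    using exists_threshold_crossing[of j0 n "\<lambda>j. det2 e (b j)" "\<lambda>j. det2 (- q, p) (b j)"] j0
    by (auto simp: f_def)
  moreover have "f (m - 1) = f m - e"
    by (simp add: f_def scale2_def prod_eq_iff algebra_simps)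
  moreover have "det2 e (f m) = 1"
    using f0 by (simp add: f_def)
  ultimately show ?thesis
    using that by auto
qed

text \<open>With \<open>f\<close> as in \<open>exists_threshold_partner\<close>, the vector \<open>b\<^sub>j\<close> that the cone hypothesis gives for
  \<open>f - e\<close> is antiparallel to \<open>e\<close> or lies to its right; in the latter case it encloses \<open>-e\<close> in a
  triangle together with a vector to the left of both \<open>e\<close> and \<open>f\<close>.\<close>
lemma antipodes_covered_primitive_vectors:
  fixes b :: "nat \<Rightarrow> int \<times> int"
  assumes nz: "\<And>j. j < n \<Longrightarrow> b j \<noteq> 0"
    and span: "\<And>v. v \<noteq> 0 \<Longrightarrow> \<exists>j<n. 0 < det2 v (b j)"
    and cone: "\<And>i f. i < n \<Longrightarrow> det2 (primitive_vector (b i)) f = 1 \<Longrightarrow>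
      \<exists>j<n. 0 < det2 f (b j) \<and> 0 < det2 (b j) (- primitive_vector (b i) - f)"
  shows "antipodes_covered (primitive_vector ` b ` {..<n})"
  unfolding antipodes_covered_def
proof
  let ?R = "primitive_vector ` b ` {..<n}"
  fix e assume "e \<in> ?R"
  then obtain i where i: "i < n" "e = primitive_vector (b i)"
    by auto
  have e: "e \<noteq> 0" "coprime (fst e) (snd e)"
    using i nz primitive_vector_nonzero coprime_primitive_vector by auto
  obtain j0 where "j0 < n" "0 < det2 e (b j0)"
    using span[OF e(1)] by blast
  then obtain f where e_f: "det2 e f = 1" and j': "\<exists>j<n. 0 < det2 e (b j) \<and> 0 < det2 f (b j)"
    and none_left: "\<not> (\<exists>j<n. 0 < det2 e (b j) \<and> 0 < det2 (f - e) (b j))"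
    using exists_threshold_partner[OF e(2)] by blast
  have "det2 e (f - e) = 1" "- e - (f - e) = - f"
    using e_f by simp_all
  then obtain j where j: "j < n" "0 < det2 (f - e) (b j)" "0 < det2 f (b j)"
    using cone[OF i(1), of "f - e"] i(2) by (auto simp: det2_swap[of "b _"])
  consider "0 < det2 e (b j)" | "det2 e (b j) = 0" | "det2 e (b j) < 0"
    by linarith
  then show "- e \<in> ?R \<or> (\<exists>u\<in>?R. \<exists>d\<in>?R. in_triangle (- e) u d)"
  proof cases
    case 1
    then show ?thesis
      using none_left j by blast
  next
    case 2
    then have "det2 (b j) e = 0"
      by (simp add: det2_swap[of e])
    moreover have "det2 (f - e) e < 0"
      using e_f det2_swap[of e] by simp
    ultimately have "primitive_vector (b j) = - e"
      using primitive_vector_antiparallel[OF e(2) _ _ j(2)] by blast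
    then show ?thesis
      using j(1) by force
  next
    case 3
    obtain j' where j': "j' < n" "0 < det2 e (b j')" "0 < det2 f (b j')"
      using j' by blast
    have "in_triangle (- e) (primitive_vector (b j')) (primitive_vector (b j))"
      using j j' 3 nz e_f
      by (intro in_triangle_uminus_of_unimodular[of _ f]) (simp_all add: det2_primitive_vector_sign)
    then show ?thesis
      using j(1) j'(1) by blast
  qed
qed

section \<open>Binomials of a kernel vector\<close>

definition pos_part :: "int vec \<Rightarrow> int vec" where
  "pos_part w = vec (dim_vec w) (\<lambda>j. max (w $ j) 0)"

definition neg_part :: "int vec \<Rightarrow> int vec" where
  "neg_part w = vec (dim_vec w) (\<lambda>j. max (- w $ j) 0)"

definition conformal_le :: "int vec \<Rightarrow> int vec \<Rightarrow> bool" where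
  "conformal_le l w \<longleftrightarrow> dim_vec l = dim_vec w \<and> (\<forall>j<dim_vec w.
     (0 \<le> w $ j \<longrightarrow> 0 \<le> l $ j \<and> l $ j \<le> w $ j) \<and> (w $ j \<le> 0 \<longrightarrow> w $ j \<le> l $ j \<and> l $ j \<le> 0))"

lemma conformal_le_index:
  assumes "conformal_le l w" "j < dim_vec w"
  shows "0 \<le> w $ j \<Longrightarrow> 0 \<le> l $ j \<and> l $ j \<le> w $ j" "w $ j \<le> 0 \<Longrightarrow> w $ j \<le> l $ j \<and> l $ j \<le> 0"
  using assms by (simp_all add: conformal_le_def)

lemma pos_neg_part_index [simp]:
  "dim_vec (pos_part w) = dim_vec w" "dim_vec (neg_part w) = dim_vec w"
  "j < dim_vec w \<Longrightarrow> pos_part w $ j = max (w $ j) 0"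
  "j < dim_vec w \<Longrightarrow> neg_part w $ j = max (- w $ j) 0"
  by (simp_all add: pos_part_def neg_part_def)

lemma pos_neg_part_carrier:
  "w \<in> carrier_vec n \<Longrightarrow> pos_part w \<in> carrier_vec n"
  "w \<in> carrier_vec n \<Longrightarrow> neg_part w \<in> carrier_vec n"
  by (auto intro!: carrier_vecI)

lemma pos_part_minus_neg_part: "pos_part w - neg_part w = w"
  by (intro eq_vecI) auto

lemma natvec_pos_neg_part:
  assumes "w \<in> carrier_vec n"
  shows "natvec n (pos_part w)" "natvec n (neg_part w)"
  using carrier_vecD[OF assms] by (auto simp: natvec_def intro!: carrier_vecI)

lemma in_kerZ_diff_iff:
  assumes "u \<in> carrier_vec (dim_col A)" "v \<in> carrier_vec (dim_col A)"
  shows "u - v \<in> kerZ A \<longleftrightarrow> A *\<^sub>v u = A *\<^sub>v v"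
proof -
  have "A *\<^sub>v (u - v) = A *\<^sub>v u - A *\<^sub>v v"
    using assms by (intro mult_minus_distrib_mat_vec[of _ "dim_row A" "dim_col A"]) auto
  then show ?thesis
    using assms unfolding kerZ_def
    by (auto simp: vec_eq_iff)
qed

lemma add_kerZ_in_fiber:
  assumes u: "u \<in> carrier_vec (dim_col A)" and k: "k \<in> kerZ A" and nat: "natvec (dim_col A) (u + k)"
  shows "u + k \<in> fiber A u"
proof -
  have "A *\<^sub>v (u + k) = A *\<^sub>v u + A *\<^sub>v k"
    using u k by (intro mult_add_distrib_mat_vec[of _ "dim_row A" "dim_col A"]) (auto simp: kerZ_def)
  then have "A *\<^sub>v (u + k) = A *\<^sub>v u"
    using k by (auto simp: kerZ_def)
  then show ?thesis
    using nat by (simp add: fiber_def)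
qed

lemma conformal_le_diff_of_le_parts:
  assumes car: "u' \<in> carrier_vec (dim_vec w)" "v' \<in> carrier_vec (dim_vec w)"
    and nonneg: "\<forall>j<dim_vec w. 0 \<le> u' $ j \<and> 0 \<le> v' $ j"
    and le: "\<forall>j<dim_vec w. u' $ j \<le> pos_part w $ j \<and> v' $ j \<le> neg_part w $ j"
  shows "conformal_le (u' - v') w"
    and "u' - v' = w \<Longrightarrow> u' = pos_part w \<and> v' = neg_part w"
proof -
  have coords: "(0 \<le> w $ j \<longrightarrow> (u' - v') $ j = u' $ j \<and> u' $ j \<le> w $ j \<and> v' $ j = 0)
      \<and> (w $ j \<le> 0 \<longrightarrow> (u' - v') $ j = - v' $ j \<and> w $ j \<le> - v' $ j \<and> u' $ j = 0)"
    if "j < dim_vec w" for j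
    using that car nonneg le by fastforce
  show "conformal_le (u' - v') w"
    unfolding conformal_le_def using car coords nonneg by auto
  assume diff: "u' - v' = w"
  have "u' $ j = pos_part w $ j \<and> v' $ j = neg_part w $ j" if j: "j < dim_vec w" for j
  proof -
    have "(u' - v') $ j = w $ j"
      using diff by simp
    then show ?thesis
      using coords[OF j] j by auto
  qed
  then show "u' = pos_part w \<and> v' = neg_part w"
    using car by (auto intro: eq_vecI)
qed

lemma conformal_le_smult_self:
  assumes conf: "conformal_le (t \<cdot>\<^sub>v w) w" and w: "w \<noteq> 0\<^sub>v (dim_vec w)"
  shows "t = 0 \<or> t = 1"
proof -
  obtain j where j: "j < dim_vec w" "w $ j \<noteq> 0"
    using w by (auto simp: vec_eq_iff)
  have "0 \<le> t \<and> t \<le> 1"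
  proof (cases "0 < w $ j")
    case True
    then have "0 \<le> t * w $ j" "t * w $ j \<le> 1 * w $ j"
      using conformal_le_index(1)[OF conf j(1)] j(1) by auto
    then show ?thesis
      using True by (simp add: zero_le_mult_iff mult_le_cancel_right)
  next
    case False
    then have "w $ j < 0"
      using j(2) by simp
    moreover from this have "t * w $ j \<le> 0" "1 * w $ j \<le> t * w $ j"
      using conformal_le_index(2)[OF conf j(1)] j(1) by auto
    ultimately show ?thesis
      by (simp add: mult_le_0_iff mult_le_cancel_right)
  qed
  then show ?thesis
    by linarith
qed

lemma in_toric_pos_neg_parts:
  assumes w: "w \<in> kerZ A" "w \<noteq> 0\<^sub>v (dim_col A)"
  shows "in_toric A (pos_part w) (neg_part w)"
proof -
  define u v where "u = pos_part w" and "v = neg_part w"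
  have w_car: "w \<in> carrier_vec (dim_col A)"
    using w(1) by (simp add: kerZ_def)
  then have uv: "natvec (dim_col A) u" "natvec (dim_col A) v"
    by (simp_all add: natvec_pos_neg_part u_def v_def)
  then have uv_car: "u \<in> carrier_vec (dim_col A)" "v \<in> carrier_vec (dim_col A)"
    by (simp_all add: natvec_def)
  have "u - v = w"
    by (simp add: u_def v_def pos_part_minus_neg_part)
  then have "in_toric A u v"
    using uv uv_car w by (auto simp: in_toric_def in_kerZ_diff_iff)
  then show ?thesis
    by (simp add: u_def v_def)
qed

lemma primitive_pos_neg_parts:
  assumes w: "w \<in> kerZ A" "w \<noteq> 0\<^sub>v (dim_col A)"
    and minimal: "\<And>l. l \<in> kerZ A \<Longrightarrow> conformal_le l w \<Longrightarrow> l = 0\<^sub>v (dim_col A) \<or> l = w"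
  shows "primitive A (pos_part w) (neg_part w)"
proof -
  have w_car: "w \<in> carrier_vec (dim_col A)"
    using w(1) by (simp add: kerZ_def)
  have "\<not> in_toric A u' v'"
    if ne: "(u', v') \<noteq> (pos_part w, neg_part w)"
      and le: "\<forall>j<dim_col A. u' $ j \<le> pos_part w $ j" "\<forall>j<dim_col A. v' $ j \<le> neg_part w $ j"
    for u' v'
  proof
    assume toric: "in_toric A u' v'"
    then have car: "u' \<in> carrier_vec (dim_vec w)" "v' \<in> carrier_vec (dim_vec w)"
      and nonneg: "\<forall>j<dim_vec w. 0 \<le> u' $ j \<and> 0 \<le> v' $ j"
      using w_car by (auto simp: in_toric_def natvec_def)
    have bounds: "\<forall>j<dim_vec w. u' $ j \<le> pos_part w $ j \<and> v' $ j \<le> neg_part w $ j"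
      using le w_car by simp
    have "u' - v' \<in> kerZ A"
      using toric by (simp add: in_toric_def natvec_def in_kerZ_diff_iff)
    moreover have "conformal_le (u' - v') w"
      by (rule conformal_le_diff_of_le_parts(1)[OF car nonneg bounds])
    moreover have "u' - v' \<noteq> w"
      using conformal_le_diff_of_le_parts(2)[OF car nonneg bounds] ne by blast
    ultimately have zero: "u' - v' = 0\<^sub>v (dim_col A)"
      using minimal by blast
    have "u' $ j = v' $ j" if "j < dim_vec w" for j
      using arg_cong[OF zero, of "\<lambda>x. x $ j"] that car w_car by simp
    then have "u' = v'"
      using car by (intro eq_vecI) simp_all
    then show False
      using toric by (simp add: in_toric_def)
  qed
  then show ?thesis
    using in_toric_pos_neg_parts[OF w] by (auto simp: primitive_def)
qed

section \<open>Two-column Gale transforms\<close>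

definition row_pair :: "int mat \<Rightarrow> nat \<Rightarrow> int \<times> int" where
  "row_pair B j = (B $$ (j, 0), B $$ (j, 1))"

text \<open>For a two-column Gale transform \<open>B\<close> of \<open>A\<close>, \<open>kernel_vec B\<close> is an isomorphism of \<open>\<int>\<^sup>2\<close> onto
  \<open>ker\<^sub>\<int> A\<close>, and the \<open>j\<close>-th entry of \<open>kernel_vec B x\<close> vanishes exactly when \<open>x \<parallel> b\<^sub>j\<close>.\<close>
definition kernel_vec :: "int mat \<Rightarrow> int \<times> int \<Rightarrow> int vec" where
  "kernel_vec B x = vec (dim_row B) (\<lambda>j. det2 x (row_pair B j))"

lemma kernel_vec_index [simp]:
  "dim_vec (kernel_vec B x) = dim_row B"
  "j < dim_row B \<Longrightarrow> kernel_vec B x $ j = det2 x (row_pair B j)"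
  by (simp_all add: kernel_vec_def)

lemma kernel_vec_carrier [simp]: "kernel_vec B x \<in> carrier_vec (dim_row B)"
  by (simp add: kernel_vec_def)

lemma kernel_vec_scale2: "kernel_vec B (scale2 t x) = t \<cdot>\<^sub>v kernel_vec B x"
  by (intro eq_vecI) simp_all

definition coeff_vec :: "int \<times> int \<Rightarrow> int vec" where
  "coeff_vec x = vec 2 (\<lambda>k. if k = 0 then - snd x else fst x)"

locale codim2_gale =
  fixes A B :: "int mat" and n :: nat
  assumes dim_col_A: "dim_col A = n" and dim_row_B: "dim_row B = n" and dim_col_B: "dim_col B = 2"
    and gale: "gale A B"
begin

lemma kernel_vec_eq_mult: "kernel_vec B x = B *\<^sub>v coeff_vec x"
proof (rule eq_vecI)
  fix j assume "j < dim_vec (B *\<^sub>v coeff_vec x)"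
  then show "kernel_vec B x $ j = (B *\<^sub>v coeff_vec x) $ j"
    using dim_col_B
    by (simp add: coeff_vec_def scalar_prod_def numeral_2_eq_2 det2_def row_pair_def algebra_simps)
qed simp

lemma mult_gale_eq_0: "A * B = 0\<^sub>m (dim_row A) 2"
proof (rule eq_matI)
  fix i k assume "i < dim_row (0\<^sub>m (dim_row A) 2 :: int mat)" "k < dim_col (0\<^sub>m (dim_row A) 2 :: int mat)"
  then have i: "i < dim_row A" and k: "k < 2"
    by auto
  have "A *\<^sub>v col B k = 0\<^sub>v (dim_row A)"
    using gale k dim_col_B by (auto simp: gale_def kerZ_def)
  moreover have "row A i \<bullet> col B k = (A *\<^sub>v col B k) $ i"
    using i by simp
  ultimately show "(A * B) $$ (i, k) = 0\<^sub>m (dim_row A) 2 $$ (i, k)"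
    using i k dim_col_B by simp
qed (simp_all add: dim_col_B)

lemma kernel_vec_in_kerZ: "kernel_vec B x \<in> kerZ A"
proof -
  have "A \<in> carrier_mat (dim_row A) n" "B \<in> carrier_mat n 2" "coeff_vec x \<in> carrier_vec 2"
    using dim_col_A dim_row_B dim_col_B by (auto simp: coeff_vec_def intro: carrier_matI)
  then have "A *\<^sub>v kernel_vec B x = (A * B) *\<^sub>v coeff_vec x"
    by (simp only: kernel_vec_eq_mult assoc_mult_mat_vec)
  also have "\<dots> = 0\<^sub>v (dim_row A)"
    unfolding mult_gale_eq_0 by (intro eq_vecI) (simp_all add: coeff_vec_def scalar_prod_def)
  finally have "A *\<^sub>v kernel_vec B x = 0\<^sub>v (dim_row A)" .
  moreover have "kernel_vec B x \<in> carrier_vec (dim_col A)"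
    using dim_col_A dim_row_B kernel_vec_carrier by metis
  ultimately show ?thesis
    by (simp add: kerZ_def)
qed

lemma kerZ_unique_coeffs: "y \<in> kerZ A \<Longrightarrow> \<exists>!c. c \<in> carrier_vec 2 \<and> y = B *\<^sub>v c"
  using gale dim_col_B unfolding gale_def by simp

lemma kerZ_imp_kernel_vec:
  assumes "y \<in> kerZ A"
  shows "\<exists>x. y = kernel_vec B x"
proof -
  obtain c where c: "c \<in> carrier_vec 2" "y = B *\<^sub>v c"
    using kerZ_unique_coeffs[OF assms] by blast
  have "dim_vec c = 2"
    using c(1) by simp
  then have "c = coeff_vec (c $ 1, - c $ 0)"
    by (intro eq_vecI) (auto simp: coeff_vec_def less_2_cases_iff)
  then show ?thesis
    using c(2) kernel_vec_eq_mult by metis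
qed

lemma kernel_vec_inj:
  assumes "kernel_vec B x = kernel_vec B y"
  shows "x = y"
proof -
  have "\<exists>!c. c \<in> carrier_vec 2 \<and> kernel_vec B x = B *\<^sub>v c"
    using kerZ_unique_coeffs kernel_vec_in_kerZ by blast
  moreover have "coeff_vec x \<in> carrier_vec 2" "coeff_vec y \<in> carrier_vec 2"
    by (simp_all add: coeff_vec_def)
  ultimately have "coeff_vec x = coeff_vec y"
    using assms kernel_vec_eq_mult by metis
  then have "coeff_vec x $ 0 = coeff_vec y $ 0" "coeff_vec x $ 1 = coeff_vec y $ 1"
    by simp_all
  then show ?thesis
    by (simp add: coeff_vec_def prod_eq_iff)
qed

lemma kernel_vec_eq_0_iff: "kernel_vec B x = 0\<^sub>v n \<longleftrightarrow> x = 0"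
proof -
  have "kernel_vec B 0 = 0\<^sub>v n"
    using dim_row_B by (intro eq_vecI) (simp_all add: det2_def)
  then show ?thesis
    using kernel_vec_inj by metis
qed

lemma kernel_vec_eqI:
  assumes "\<And>j. j < n \<Longrightarrow> det2 x (row_pair B j) = det2 y (row_pair B j)"
  shows "x = y"
  using assms dim_row_B by (intro kernel_vec_inj eq_vecI) simp_all

lemma row_pair_eq_0_iff:
  assumes "j < n"
  shows "row_pair B j = 0 \<longleftrightarrow> row B j = 0\<^sub>v 2"
  using assms dim_row_B dim_col_B by (auto simp: row_pair_def vec_eq_iff less_2_cases_iff)

lemma positively_spanning:
  assumes pointed: "\<forall>y\<in>kerZ A. natvec n y \<longrightarrow> y = 0\<^sub>v n" and x: "x \<noteq> 0"
  shows "\<exists>j<n. 0 < det2 x (row_pair B j)"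
proof (rule ccontr)
  assume "\<not> (\<exists>j<n. 0 < det2 x (row_pair B j))"
  then have "natvec n (kernel_vec B (- x))"
    using dim_row_B by (auto simp: natvec_def intro!: carrier_vecI)
  then have "kernel_vec B (- x) = 0\<^sub>v n"
    using pointed kernel_vec_in_kerZ by blast
  then show False
    using x by (simp add: kernel_vec_eq_0_iff)
qed

lemma primitive_circuit:
  assumes i: "i < n" "row_pair B i \<noteq> 0"
  defines "w \<equiv> kernel_vec B (primitive_vector (row_pair B i))"
  shows "primitive A (pos_part w) (neg_part w)"
proof (rule primitive_pos_neg_parts)
  define e where "e = primitive_vector (row_pair B i)"
  have e: "e \<noteq> 0" "coprime (fst e) (snd e)"
    using i(2) by (simp_all add: e_def primitive_vector_nonzero coprime_primitive_vector)
  show "w \<in> kerZ A"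
    by (simp add: w_def kernel_vec_in_kerZ)
  show w0: "w \<noteq> 0\<^sub>v (dim_col A)"
    using e(1) by (simp add: w_def e_def[symmetric] dim_col_A kernel_vec_eq_0_iff)
  fix l assume l: "l \<in> kerZ A" "conformal_le l w"
  then obtain x where x: "l = kernel_vec B x"
    using kerZ_imp_kernel_vec by blast
  have "w $ i = 0"
    using i by (simp add: w_def dim_row_B det2_primitive_vector_sign)
  then have "l $ i = 0"
    using conformal_le_index[OF l(2), of i] i(1) dim_row_B by (simp add: w_def)
  then have "det2 x (row_pair B i) = 0"
    using i(1) dim_row_B by (simp add: x)
  then have "det2 x e = 0"
    using i(2) by (simp add: e_def det2_primitive_vector_sign)
  then obtain t where "x = scale2 t e"
    using parallel_to_coprime_imp_multiple[OF e(2)] by blast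
  then have l_eq: "l = t \<cdot>\<^sub>v w"
    by (simp add: x w_def e_def kernel_vec_scale2)
  then have "t = 0 \<or> t = 1"
    using conformal_le_smult_self l(2) w0 dim_col_A dim_row_B by (simp add: w_def)
  then show "l = 0\<^sub>v (dim_col A) \<or> l = w"
    by (auto simp: l_eq w_def dim_col_A dim_row_B)
qed

lemma fiber_circuit:
  assumes sr: "strongly_robust A" and i: "i < n" "row_pair B i \<noteq> 0"
  defines "w \<equiv> kernel_vec B (primitive_vector (row_pair B i))"
  shows "fiber A (pos_part w) = {pos_part w, neg_part w}"
proof -
  have "(pos_part w, neg_part w) \<in> graver A"
    using primitive_circuit[OF i] by (simp add: graver_def w_def)
  then have "(pos_part w, neg_part w) \<in> indispensables A"
    using sr by (simp add: strongly_robust_def)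
  then show ?thesis
    by (simp add: indispensables_def indispensable_def)
qed

lemma pos_part_add_kernel_vec_cases:
  assumes "pos_part (kernel_vec B x) + kernel_vec B g = pos_part (kernel_vec B x)
    \<or> pos_part (kernel_vec B x) + kernel_vec B g = neg_part (kernel_vec B x)"
  shows "g = 0 \<or> g = - x"
  using assms
proof
  assume eq: "pos_part (kernel_vec B x) + kernel_vec B g = pos_part (kernel_vec B x)"
  have "det2 g (row_pair B j) = det2 0 (row_pair B j)" if "j < n" for j
    using arg_cong[OF eq, of "\<lambda>v. v $ j"] that dim_row_B by (simp add: det2_def)
  then show ?thesis
    using kernel_vec_eqI by blast
next
  assume eq: "pos_part (kernel_vec B x) + kernel_vec B g = neg_part (kernel_vec B x)"
  have "det2 g (row_pair B j) = det2 (- x) (row_pair B j)" if "j < n" for j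
    using arg_cong[OF eq, of "\<lambda>v. v $ j"] that dim_row_B by simp
  then show ?thesis
    using kernel_vec_eqI by blast
qed

text \<open>If the cone condition failed for \<open>f\<close>, then with \<open>g = -e - f\<close> the vector \<open>w\<^sup>+ + kernel_vec B g\<close>
  would be a third element of the fiber of \<open>w\<^sup>+\<close>, where \<open>w\<close> is the circuit of \<open>e\<close>.\<close>
lemma strongly_robust_cone:
  assumes sr: "strongly_robust A" and i: "i < n" "row_pair B i \<noteq> 0"
    and ef: "det2 (primitive_vector (row_pair B i)) f = 1"
  shows "\<exists>j<n. 0 < det2 f (row_pair B j) \<and>
    0 < det2 (row_pair B j) (- primitive_vector (row_pair B i) - f)"
proof (rule ccontr)
  assume no_vector: "\<not> ?thesis"
  define e g w where "e = primitive_vector (row_pair B i)" and "g = - e - f"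
    and "w = kernel_vec B e"
  define z where "z = pos_part w + kernel_vec B g"
  have z_nonneg: "0 \<le> z $ j" if j: "j < n" for j
  proof -
    have "\<not> (0 < det2 f (row_pair B j) \<and> 0 < det2 (row_pair B j) g)"
      using no_vector j unfolding g_def e_def by blast
    moreover have "det2 (row_pair B j) g = - det2 g (row_pair B j)"
      by (rule det2_swap)
    moreover have "det2 e (row_pair B j) = - det2 f (row_pair B j) - det2 g (row_pair B j)"
      by (simp add: g_def)
    moreover have "z $ j = max (det2 e (row_pair B j)) 0 + det2 g (row_pair B j)"
      using j dim_row_B by (simp add: z_def w_def)
    ultimately show ?thesis
      by linarith
  qed
  have w_car: "pos_part w \<in> carrier_vec (dim_col A)"
    using pos_neg_part_carrier(1) kernel_vec_carrier dim_row_B dim_col_A by (metis w_def)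
  then have "natvec (dim_col A) z"
    using z_nonneg dim_col_A dim_row_B by (auto simp: natvec_def z_def intro!: carrier_vecI)
  then have "z \<in> fiber A (pos_part w)"
    unfolding z_def by (rule add_kerZ_in_fiber[OF w_car kernel_vec_in_kerZ])
  then have "g = 0 \<or> g = - e"
    using fiber_circuit[OF sr i] pos_part_add_kernel_vec_cases
    by (simp add: z_def w_def e_def)
  then have "f = - e \<or> f = 0"
    by (auto simp: g_def)
  then show False
    using ef by (auto simp: e_def det2_def)
qed

lemma brow_index:
  assumes "s < n"
  shows "dim_vec (brow B s) = 2" "k < 2 \<Longrightarrow> brow B s $ k = of_int (B $$ (s, k))"
  using assms dim_row_B dim_col_B by (simp_all add: brow_def)

lemma of_int_det2_row_pair:
  assumes "s < n" "t < n"
  shows "of_int (det2 (row_pair B s) (row_pair B t)) = brow B s $ 0 * brow B t $ 1 - brow B s $ 1 * brow B t $ 0"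
  using assms by (simp add: brow_index det2_def row_pair_def)

lemma brow_eq_smult:
  assumes st: "s < n" "t < n" and a: "a \<noteq> 0" and eq: "scale2 a (row_pair B s) = scale2 c (row_pair B t)"
  shows "brow B s = (of_int c / of_int a) \<cdot>\<^sub>v brow B t"
proof (rule eq_vecI)
  have "a * fst (row_pair B s) = c * fst (row_pair B t)" "a * snd (row_pair B s) = c * snd (row_pair B t)"
    using eq by (simp_all add: scale2_def)
  then have "rat_of_int a * of_int (fst (row_pair B s)) = of_int c * of_int (fst (row_pair B t))"
    "rat_of_int a * of_int (snd (row_pair B s)) = of_int c * of_int (snd (row_pair B t))"
    by (metis of_int_mult)+
  then show "brow B s $ k = (of_int c / of_int a \<cdot>\<^sub>v brow B t) $ k"
    if "k < dim_vec (of_int c / of_int a \<cdot>\<^sub>v brow B t)" for k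
    using that st a by (auto simp: brow_index less_2_cases_iff row_pair_def field_simps)
qed (simp add: st brow_index)

lemma brow_multiple_of_parallel:
  assumes s: "s < n" and i: "i < n" "row_pair B i \<noteq> 0"
    and parallel: "det2 (row_pair B s) (row_pair B i) = 0"
  shows "\<exists>c. brow B s = c \<cdot>\<^sub>v brow B i"
proof -
  obtain a c where "a \<noteq> 0" "scale2 a (row_pair B s) = scale2 c (row_pair B i)"
    using parallel_imp_common_multiple[OF parallel i(2)] by blast
  then show ?thesis
    using brow_eq_smult[OF s i(1)] by blast
qed

lemma det2_eq_0_of_brow_multiples:
  assumes "s < n" "t < n" "w \<in> carrier_vec 2"
    and "brow B s = c \<cdot>\<^sub>v w" "brow B t = d \<cdot>\<^sub>v w"
  shows "det2 (row_pair B s) (row_pair B t) = 0"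
proof -
  have "rat_of_int (det2 (row_pair B s) (row_pair B t)) = 0"
    using of_int_det2_row_pair[OF assms(1,2)] assms(3-5) by (simp add: algebra_simps)
  then show ?thesis
    by simp
qed

lemma bouquet_parallel_class:
  assumes i: "i < n" "row_pair B i \<noteq> 0"
  shows "bouquet B {k. k < n \<and> det2 (row_pair B k) (row_pair B i) = 0}"
proof -
  define S where "S = {k. k < n \<and> det2 (row_pair B k) (row_pair B i) = 0}"
  have "i \<in> S"
    using i(1) by (simp add: S_def)
  have brow_i: "brow B i \<noteq> 0\<^sub>v 2"
  proof
    assume "brow B i = 0\<^sub>v 2"
    then have "brow B i $ 0 = 0" "brow B i $ 1 = 0"
      by simp_all
    then show False
      using i by (simp add: brow_index row_pair_def)
  qed
  have "\<exists>c. brow B s = c \<cdot>\<^sub>v brow B i" if "s \<in> S" for s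
    using that i by (intro brow_multiple_of_parallel) (simp_all add: S_def)
  moreover have "brow B i \<in> carrier_vec (dim_col B)"
    using i(1) dim_col_B by (simp add: carrier_vecI brow_index)
  ultimately have span: "one_dim_span B S"
    using brow_i \<open>i \<in> S\<close> dim_col_B unfolding one_dim_span_def by metis
  have "\<not> one_dim_span B T" if T: "S \<subset> T" "T \<subseteq> {..<dim_row B}" for T
  proof
    assume "one_dim_span B T"
    then obtain w where w: "w \<in> carrier_vec 2" "\<forall>s\<in>T. \<exists>c. brow B s = c \<cdot>\<^sub>v w"
      using dim_col_B by (auto simp: one_dim_span_def)
    obtain k where k: "k \<in> T" "k \<notin> S"
      using T(1) by blast
    then have "k < n"
      using T(2) dim_row_B by auto
    obtain ck ci where "brow B k = ck \<cdot>\<^sub>v w" "brow B i = ci \<cdot>\<^sub>v w"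
      using w(2) k(1) \<open>i \<in> S\<close> T(1) by blast
    then have "det2 (row_pair B k) (row_pair B i) = 0"
      by (rule det2_eq_0_of_brow_multiples[OF \<open>k < n\<close> i(1) w(1)])
    then show False
      using k(2) \<open>k < n\<close> by (simp add: S_def)
  qed
  then show ?thesis
    using span dim_row_B by (auto simp: bouquet_def S_def)
qed

lemma mixed_bouquet_parallel_class:
  assumes i: "i < n" "row_pair B i \<noteq> 0" and j: "j < n" "row_pair B j \<noteq> 0"
    and antipodal: "primitive_vector (row_pair B j) = - primitive_vector (row_pair B i)"
  shows "mixed_bouquet B {k. k < n \<and> det2 (row_pair B k) (row_pair B i) = 0}"
proof -
  define p where "p = primitive_vector (row_pair B i)"
  define gi gj where "gi = gcd (fst (row_pair B i)) (snd (row_pair B i))"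
    and "gj = gcd (fst (row_pair B j)) (snd (row_pair B j))"
  have g: "0 < gi" "0 < gj"
    using i(2) j(2) gcd_pair_pos by (simp_all add: gi_def gj_def)
  have "row_pair B i = scale2 gi p" "row_pair B j = scale2 gj (- p)"
    using scale2_gcd_primitive_vector antipodal by (metis gi_def gj_def p_def)+
  then have multiple: "scale2 gi (row_pair B j) = scale2 (- gj) (row_pair B i)"
    and "det2 (row_pair B j) (row_pair B i) = 0"
    by (simp_all add: scale2_def det2_def)
  then have "j \<in> {k. k < n \<and> det2 (row_pair B k) (row_pair B i) = 0}"
    using j(1) by simp
  moreover have "brow B j = (of_int (- gj) / of_int gi) \<cdot>\<^sub>v brow B i"
    using g by (intro brow_eq_smult[OF j(1) i(1) _ multiple]) simp
  moreover have "i \<in> {k. k < n \<and> det2 (row_pair B k) (row_pair B i) = 0}"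
    using i(1) by simp
  moreover have "of_int (- gj) / of_int gi < (0 :: rat)"
    using g by (simp add: divide_neg_pos)
  ultimately show ?thesis
    unfolding mixed_bouquet_def using bouquet_parallel_class[OF i] by blast
qed

lemma two_mixed_bouquets:
  assumes nz: "\<And>j. j < n \<Longrightarrow> row_pair B j \<noteq> 0"
  defines "R \<equiv> primitive_vector ` row_pair B ` {..<n}"
  assumes m: "m1 \<in> R" "- m1 \<in> R" "m2 \<in> R" "- m2 \<in> R" and independent: "det2 m1 m2 \<noteq> 0"
  shows "2 \<le> card {S. mixed_bouquet B S}"
proof -
  have index: "\<exists>k<n. r = primitive_vector (row_pair B k)" if "r \<in> R" for r
    using that unfolding R_def by blast
  obtain i1 j1 i2 j2 where idx: "i1 < n" "j1 < n" "i2 < n" "j2 < n"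
    and m1: "m1 = primitive_vector (row_pair B i1)" "- m1 = primitive_vector (row_pair B j1)"
    and m2: "m2 = primitive_vector (row_pair B i2)" "- m2 = primitive_vector (row_pair B j2)"
    using index[OF m(1)] index[OF m(2)] index[OF m(3)] index[OF m(4)] by blast
  define S1 S2 where "S1 = {k. k < n \<and> det2 (row_pair B k) (row_pair B i1) = 0}"
    and "S2 = {k. k < n \<and> det2 (row_pair B k) (row_pair B i2) = 0}"
  have "mixed_bouquet B S1"
    unfolding S1_def using m1 by (intro mixed_bouquet_parallel_class[OF idx(1) nz[OF idx(1)] idx(2) nz[OF idx(2)]]) simp_all
  moreover have "mixed_bouquet B S2"
    unfolding S2_def using m2 by (intro mixed_bouquet_parallel_class[OF idx(3) nz[OF idx(3)] idx(4) nz[OF idx(4)]]) simp_all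
  moreover have "S1 \<noteq> S2"
  proof -
    have "det2 m2 m1 \<noteq> 0"
      using independent det2_swap[of m2 m1] by simp
    then have "det2 (row_pair B i2) (primitive_vector (row_pair B i1)) \<noteq> 0"
      using m1(1) m2(1) det2_primitive_vector_sign(5)[OF nz[OF idx(3)]] by simp
    then have "det2 (row_pair B i2) (row_pair B i1) \<noteq> 0"
      using det2_primitive_vector_sign(3)[OF nz[OF idx(1)]] by simp
    then have "i2 \<notin> S1" "i2 \<in> S2"
      using idx(3) by (simp_all add: S1_def S2_def)
    then show ?thesis
      by blast
  qed
  moreover have "{S. mixed_bouquet B S} \<subseteq> Pow {..<dim_row B}"
    unfolding mixed_bouquet_def bouquet_def by blast
  then have "finite {S. mixed_bouquet B S}"
    by (rule finite_subset) simp
  ultimately have "card {S1, S2} \<le> card {S. mixed_bouquet B S}"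
    by (intro card_mono) simp_all
  with \<open>S1 \<noteq> S2\<close> show ?thesis
    by simp
qed

lemma antipodes_covered_rows:
  assumes sr: "strongly_robust A" and pointed: "\<forall>y\<in>kerZ A. natvec n y \<longrightarrow> y = 0\<^sub>v n"
    and nz: "\<And>j. j < n \<Longrightarrow> row_pair B j \<noteq> 0"
  shows "antipodes_covered (primitive_vector ` row_pair B ` {..<n})"
  using nz positively_spanning[OF pointed]
proof (rule antipodes_covered_primitive_vectors)
  fix i f assume "i < n" "det2 (primitive_vector (row_pair B i)) f = 1"
  then show "\<exists>j<n. 0 < det2 f (row_pair B j) \<and>
      0 < det2 (row_pair B j) (- primitive_vector (row_pair B i) - f)"
    using strongly_robust_cone[OF sr] nz by blast
qed

lemma positively_spanning_primitive_vectors: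
  assumes pointed: "\<forall>y\<in>kerZ A. natvec n y \<longrightarrow> y = 0\<^sub>v n"
    and nz: "\<And>j. j < n \<Longrightarrow> row_pair B j \<noteq> 0" and v: "v \<noteq> 0"
  shows "\<exists>r\<in>primitive_vector ` row_pair B ` {..<n}. 0 < det2 v r"
proof -
  obtain j where "j < n" "0 < det2 v (row_pair B j)"
    using positively_spanning[OF pointed v] by blast
  then have "j < n" "0 < det2 v (primitive_vector (row_pair B j))"
    using det2_primitive_vector_sign(1)[OF nz] by simp_all
  then show ?thesis
    by blast
qed

end

theorem corollary1p2:
  fixes A B :: "int mat" and n :: nat
  assumes "dim_col A = n" and "dim_row A + 2 = n"
    and "rank_int A = n - 2"
    and "\<forall>x \<in> kerZ A. natvec n x \<longrightarrow> x = 0\<^sub>v n"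
    and "gale A B"
    and "\<forall>i < n. row B i \<noteq> 0\<^sub>v (dim_col B)"
    and "strongly_robust A"
  shows "2 \<le> card {S. mixed_bouquet B S}"
proof -
  have "dim_row B = dim_col A" "dim_col B = dim_col A - rank_int A"
    using assms(5) unfolding gale_def by blast+
  then interpret codim2_gale A B n
    using assms(1-3,5) by unfold_locales simp_all
  have nz: "row_pair B j \<noteq> 0" if "j < n" for j
    using assms(6) that dim_col_B by (simp add: row_pair_eq_0_iff)
  define R where "R = primitive_vector ` row_pair B ` {..<n}"
  have "finite R"
    by (simp add: R_def)
  moreover have "antipodes_covered R"
    unfolding R_def using assms(7,4) nz by (rule antipodes_covered_rows)
  moreover have "\<exists>r\<in>R. 0 < det2 v r" if "v \<noteq> 0" for v
    unfolding R_def using assms(4) nz that by (rule positively_spanning_primitive_vectors)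
  ultimately obtain m1 m2 where "m1 \<in> R" "m2 \<in> R" "- m1 \<in> R" "- m2 \<in> R" "det2 m1 m2 \<noteq> 0"
    using two_independent_antipodal_pairs by blast
  then show ?thesis
    using two_mixed_bouquets[OF nz] by (simp add: R_def)
qed

end
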